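(* Let $P$ be a finite ranked poset with rank function $r$, let $P^*\subseteq P$ be a set of marked elements with $\min(P)\cup\max(P)\subseteq P^*$, and let $\lambda^r\colon P^*\to\mathbb{Z}$ be given by $\lambda^r(a)=r(a)$. Then for every partition $P\setminus P^*=C\sqcup O$, the marked chain-order polytope $\mathcal{O}_{C,O}(P,\lambda^r)$, regarded as a subset of $\mathbb{R}^{P\setminus P^*}$, has a unique interior lattice point.
   Context: A rank function on a poset $P$ is a map $r\colon P\to\mathbb{Z}$ with $r(p)=r(q)-1$ for every covering relation $p\prec q$; $P$ is ranked if it has one. For an order-preserving $\lambda\colon P^*\to\mathbb{R}$ and a partition $P\setminus P^*=C\sqcup O$, $\mathcal{O}_{C,O}(P,\lambda)\subseteq\mathbb{R}^P$ is the set of all $\mathbf{x}$ with: (1) $x_a=\lambda(a)$ for $a\in P^*$; (2) $x_p\ge0$ for $p\in C$; (3) $x_{p_1}+\cdots+x_{p_r}\le x_b-x_a$ for every saturated chain $a\prec p_1\prec\cdots\prec p_r\prec b$ in $P$ with $a,b\in P^*\sqcup O$, all $p_i\in C$, $r\ge0$. It is regarded as a subset of $\mathbb{R}^{P\setminus P^*}$ via projection onto the unmarked coordinates; "interior" means interior in $\mathbb{R}^{P\setminus P^*}$ and lattice points are points of $\mathbb{Z}^{P\setminus P^*}$. *)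

theory Defs
  imports "HOL-Analysis.Analysis"
begin

text \<open>A finite poset is modelled as a finite carrier set P inside an ordered type, with the
induced order.\<close>

definition covers :: "'a::order set \<Rightarrow> 'a \<Rightarrow> 'a \<Rightarrow> bool" where
  "covers P p q \<longleftrightarrow> p \<in> P \<and> q \<in> P \<and> p < q \<and> \<not> (\<exists>z\<in>P. p < z \<and> z < q)"

definition is_rank_function :: "'a::order set \<Rightarrow> ('a \<Rightarrow> int) \<Rightarrow> bool" where
  "is_rank_function P r \<longleftrightarrow> (\<forall>p q. covers P p q \<longrightarrow> r p = r q - 1)"

definition min_elems :: "'a::order set \<Rightarrow> 'a set" where
  "min_elems P = {p \<in> P. \<not> (\<exists>q\<in>P. q < p)}"

definition max_elems :: "'a::order set \<Rightarrow> 'a set" where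
  "max_elems P = {p \<in> P. \<not> (\<exists>q\<in>P. p < q)}"

definition saturated_chain :: "'a::order set \<Rightarrow> 'a list \<Rightarrow> bool" where
  "saturated_chain P cs \<longleftrightarrow> 2 \<le> length cs \<and>
     (\<forall>i. Suc i < length cs \<longrightarrow> covers P (cs ! i) (cs ! Suc i))"

text \<open>The marked chain-order polytope, as a set of points of R^P (functions vanishing off P).
The inner elements of a chain cs are butlast (tl cs).\<close>
definition marked_chain_order_polytope ::
  "'a::order set \<Rightarrow> 'a set \<Rightarrow> ('a \<Rightarrow> real) \<Rightarrow> 'a set \<Rightarrow> 'a set \<Rightarrow> ('a \<Rightarrow> real) set" where
  "marked_chain_order_polytope P Pstar lam C Op =
     {x. (\<forall>p. p \<notin> P \<longrightarrow> x p = 0)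
       \<and> (\<forall>a\<in>Pstar. x a = lam a)
       \<and> (\<forall>p\<in>C. 0 \<le> x p)
       \<and> (\<forall>cs. saturated_chain P cs \<and> hd cs \<in> Pstar \<union> Op \<and> last cs \<in> Pstar \<union> Op
               \<and> set (butlast (tl cs)) \<subseteq> C
               \<longrightarrow> sum_list (map x (butlast (tl cs))) \<le> x (last cs) - x (hd cs))}"

definition coord_space :: "'a set \<Rightarrow> ('a \<Rightarrow> real) set" where
  "coord_space U = {y. \<forall>p. p \<notin> U \<longrightarrow> y p = 0}"

definition proj_coords :: "'a set \<Rightarrow> ('a \<Rightarrow> real) \<Rightarrow> ('a \<Rightarrow> real)" where
  "proj_coords U x = (\<lambda>p. if p \<in> U then x p else 0)"

definition interior_in_coords :: "'a set \<Rightarrow> ('a \<Rightarrow> real) set \<Rightarrow> ('a \<Rightarrow> real) set" where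
  "interior_in_coords U S =
     {y. \<exists>T. openin (top_of_set (coord_space U)) T \<and> y \<in> T \<and> T \<subseteq> S}"

definition lattice_points :: "'a set \<Rightarrow> ('a \<Rightarrow> real) set" where
  "lattice_points U = {y \<in> coord_space U. \<forall>p\<in>U. y p \<in> \<int>}"

end

theory Submission
  imports Defs
begin

text \<open>
  Write a constraint chain as \<open>a \<prec> p\<^sub>1 \<prec> \<dots> \<prec> p\<^sub>k \<prec> b\<close> with \<open>a, b \<in> P\<^sup>* \<union> O\<close> and all
  \<open>p\<^sub>i \<in> C\<close>; then \<open>r b - r a = k + 1\<close>. Perturbing one unmarked coordinate shows that an
  interior point satisfies each defining inequality strictly, so by integrality an interior
  lattice point \<open>y\<close> has slack at least 1: \<open>y p \<ge> 1\<close> on \<open>C\<close>, and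
  \<open>\<Sum>\<^sub>i y p\<^sub>i + 1 \<le> y b - y a\<close>, i.e. the excess \<open>y - r\<close> grows along a constraint chain by at
  least \<open>\<Sum>\<^sub>i (y p\<^sub>i - 1) \<ge> 0\<close>. The excess vanishes on the marked elements, which include all
  minimal and maximal ones, and from every unmarked element one can descend (ascend) through
  \<open>C\<close> to an element of \<open>P\<^sup>* \<union> O\<close>. Induction over the poset in both directions therefore makes
  the excess vanish on \<open>O\<close>, and then the constraint chain through any \<open>p \<in> C\<close> forces
  \<open>y p = 1\<close>. Conversely, this point meets every constraint with slack exactly 1; since a chain
  has at most \<open>|P|\<close> elements, the box of radius \<open>1 / (|P| + 1)\<close> around it stays in the polytope.
\<close>

lemma saturated_chain_iff:
  "saturated_chain P cs \<longleftrightarrow> 2 \<le> length cs \<and> successively (covers P) cs"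
  unfolding saturated_chain_def successively_conv_nth by blast

lemma successively_covers_sorted:
  assumes "successively (covers P) cs"
  shows "sorted_wrt (<) cs"
proof -
  have "successively (<) cs"
    using assms by (rule successively_mono) (auto simp: covers_def)
  then show ?thesis
    using successively_conv_sorted_wrt[of "(<)" cs] by (metis order_less_trans transpI)
qed

lemma sorted_wrt_less_distinct:
  fixes cs :: "'a::order list"
  shows "sorted_wrt (<) cs \<Longrightarrow> distinct cs"
  by (induction cs) auto

lemma successively_covers_subset:
  assumes "successively (covers P) (a # cs)" and "cs \<noteq> []"
  shows "set (a # cs) \<subseteq> P"
  using assms
proof (induction cs arbitrary: a)
  case (Cons b cs)
  then show ?case by (cases cs) (auto simp: covers_def)
qed simp

lemma successively_covers_length_le_card:
  assumes "finite P" and "successively (covers P) (a # cs)" and "cs \<noteq> []"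
  shows "length (a # cs) \<le> card P"
proof -
  have "distinct (a # cs)"
    using assms(2) by (intro sorted_wrt_less_distinct successively_covers_sorted)
  then have "length (a # cs) = card (set (a # cs))"
    by (simp add: distinct_card)
  also have "\<dots> \<le> card P"
    using assms by (intro card_mono successively_covers_subset)
  finally show ?thesis .
qed

lemma successively_glue:
  "successively R (xs @ [x]) \<Longrightarrow> successively R (x # ys) \<Longrightarrow> successively R (xs @ x # ys)"
  by (auto simp: successively_append_iff)

lemma rank_last_minus_hd:
  assumes "is_rank_function P r" and "successively (covers P) cs" and "cs \<noteq> []"
  shows "r (last cs) - r (hd cs) = int (length cs) - 1"
  using assms(2,3)
proof (induction cs rule: induct_list012)
  case (3 a b cs)
  then have "r a = r b - 1"
    using assms(1) by (auto simp: is_rank_function_def)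
  with 3 show ?case by auto
qed auto

lemma finite_strict_order_induct:
  assumes "finite P" and "q \<in> P"
    and trans: "\<And>a b c. R a b \<Longrightarrow> R b c \<Longrightarrow> R a c" and irrefl: "\<And>a. \<not> R a a"
    and step: "\<And>q. q \<in> P \<Longrightarrow> (\<And>a. a \<in> P \<Longrightarrow> R a q \<Longrightarrow> Q a) \<Longrightarrow> Q q"
  shows "Q q"
  using assms(2)
proof (induction "card {a \<in> P. R a q}" arbitrary: q rule: less_induct)
  case less
  show ?case
  proof (rule step[OF less.prems])
    fix a assume "a \<in> P" "R a q"
    then have "{b \<in> P. R b a} \<subset> {b \<in> P. R b q}"
      using trans irrefl by blast
    then have "card {b \<in> P. R b a} < card {b \<in> P. R b q}"
      using \<open>finite P\<close> by (intro psubset_card_mono) auto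
    then show "Q a" using less.hyps \<open>a \<in> P\<close> by blast
  qed
qed

lemma exists_lower_cover:
  assumes "finite P" and "a \<in> P" and "q \<in> P" and "a < q"
  obtains c where "covers P c q"
proof -
  let ?M = "{z \<in> P. a \<le> z \<and> z < q}"
  have "finite ?M" "?M \<noteq> {}"
    using assms by auto
  then obtain m where m: "m \<in> ?M" and max: "\<And>z. z \<in> ?M \<Longrightarrow> m \<le> z \<Longrightarrow> m = z"
    by (meson finite_has_maximal)
  have "\<not> (m < z \<and> z < q)" if "z \<in> P" for z
  proof
    assume mzq: "m < z \<and> z < q"
    with m have "z \<in> ?M"
      using that by (auto intro: order.trans)
    with mzq show False
      using max[of z] by (metis less_imp_le less_irrefl)
  qed
  with m assms(3) have "covers P m q"
    by (simp add: covers_def)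
  then show thesis by (rule that)
qed

lemma exists_upper_cover:
  assumes "finite P" and "a \<in> P" and "q \<in> P" and "q < a"
  obtains c where "covers P q c"
proof -
  let ?M = "{z \<in> P. z \<le> a \<and> q < z}"
  have "finite ?M" "?M \<noteq> {}"
    using assms by auto
  then obtain m where m: "m \<in> ?M" and min: "\<And>z. z \<in> ?M \<Longrightarrow> z \<le> m \<Longrightarrow> m = z"
    by (meson finite_has_minimal)
  have "\<not> (q < z \<and> z < m)" if "z \<in> P" for z
  proof
    assume qzm: "q < z \<and> z < m"
    with m have "z \<in> ?M"
      using that by (auto intro: order.trans)
    with qzm show False
      using min[of z] by (metis less_imp_le less_irrefl)
  qed
  with m assms(3) have "covers P q m"
    by (simp add: covers_def)
  then show thesis by (rule that)
qed

lemma Ints_less_imp_add_one_le: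
  fixes a b :: "'a::linordered_idom"
  assumes "a \<in> \<int>" and "b \<in> \<int>" and "a < b"
  shows "a + 1 \<le> b"
proof -
  obtain m n where a: "a = of_int m" and b: "b = of_int n"
    using assms(1,2) by (auto elim!: Ints_cases)
  with assms(3) have "m + 1 \<le> n"
    by simp
  then have "of_int (m + 1) \<le> (of_int n :: 'a)"
    by (simp only: of_int_le_iff)
  with a b show ?thesis
    by simp
qed

lemma sum_list_map_Ints:
  "(\<And>x. x \<in> set xs \<Longrightarrow> f x \<in> \<int>) \<Longrightarrow> sum_list (map f xs) \<in> \<int>"
  by (induction xs) auto

lemma interior_in_coords_subset: "interior_in_coords U A \<subseteq> A"
  unfolding interior_in_coords_def by blast

lemma interior_in_coordsI:
  assumes "open S" and "y \<in> S" and "y \<in> coord_space U" and "coord_space U \<inter> S \<subseteq> A"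
  shows "y \<in> interior_in_coords U A"
  unfolding interior_in_coords_def using assms openin_open_Int by blast

lemma interior_in_coords_perturb:
  assumes "y \<in> interior_in_coords U A" and "p \<in> U"
  obtains e where "e > 0" and "\<And>t. \<bar>t\<bar> < e \<Longrightarrow> y(p := y p + t) \<in> A"
proof -
  obtain T where T: "openin (top_of_set (coord_space U)) T" "y \<in> T" "T \<subseteq> A"
    using assms(1) unfolding interior_in_coords_def by blast
  then obtain S where S: "open S" "T = coord_space U \<inter> S"
    by (auto simp: openin_open)
  define line where "line = (\<lambda>t::real. y(p := y p + t))"
  have "continuous_on UNIV line"
    unfolding line_def
  proof (intro continuous_on_coordinatewise_then_product)
    fix i show "continuous_on UNIV (\<lambda>t. (y(p := y p + t)) i)"
      by (cases "i = p") (auto intro!: continuous_intros)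
  qed
  then have "open (line -` S)"
    using S(1) by (rule open_vimage[rotated])
  moreover have "0 \<in> line -` S"
    using S T(2) by (simp add: line_def)
  ultimately obtain e where "e > 0" and ball: "ball 0 e \<subseteq> line -` S"
    by (rule openE)
  show thesis
  proof (rule that[OF \<open>e > 0\<close>])
    fix t :: real assume "\<bar>t\<bar> < e"
    then have "line t \<in> S"
      using ball by (auto simp: dist_real_def)
    moreover have "line t \<in> coord_space U"
      using S T(2) assms(2) by (auto simp: coord_space_def line_def)
    ultimately show "y(p := y p + t) \<in> A"
      using S(2) T(3) by (auto simp: line_def)
  qed
qed

lemma open_coordinate_box:
  fixes y :: "'a \<Rightarrow> real"
  assumes "finite U"
  shows "open {z. \<forall>p\<in>U. \<bar>z p - y p\<bar> < d}"
proof -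
  have "{z. \<forall>p\<in>U. \<bar>z p - y p\<bar> < d} = (\<Inter>p\<in>U. {z. \<bar>z p - y p\<bar> < d})"
    by auto
  also have "open \<dots>"
    using assms by (intro open_INT ballI open_Collect_less continuous_intros) auto
  finally show ?thesis .
qed

definition marked_lift :: "'a set \<Rightarrow> ('a \<Rightarrow> real) \<Rightarrow> ('a \<Rightarrow> real) \<Rightarrow> 'a \<Rightarrow> real" where
  "marked_lift Pstar lam y = (\<lambda>q. if q \<in> Pstar then lam q else y q)"

lemma marked_lift_update:
  "p \<notin> Pstar \<Longrightarrow> marked_lift Pstar lam (y(p := v)) = (marked_lift Pstar lam y)(p := v)"
  by (auto simp: marked_lift_def)

lemma mem_proj_marked_chain_order_polytope_iff:
  "y \<in> proj_coords (P - Pstar) ` marked_chain_order_polytope P Pstar lam C Op \<longleftrightarrow>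
     y \<in> coord_space (P - Pstar) \<and>
     marked_lift Pstar lam y \<in> marked_chain_order_polytope P Pstar lam C Op"
proof
  assume "y \<in> proj_coords (P - Pstar) ` marked_chain_order_polytope P Pstar lam C Op"
  then obtain x where "x \<in> marked_chain_order_polytope P Pstar lam C Op"
    and "y = proj_coords (P - Pstar) x" by blast
  moreover from this have "marked_lift Pstar lam y = x"
    by (auto simp: marked_chain_order_polytope_def proj_coords_def marked_lift_def)
  ultimately show "y \<in> coord_space (P - Pstar) \<and>
     marked_lift Pstar lam y \<in> marked_chain_order_polytope P Pstar lam C Op"
    by (auto simp: coord_space_def proj_coords_def)
next
  assume "y \<in> coord_space (P - Pstar) \<and>
     marked_lift Pstar lam y \<in> marked_chain_order_polytope P Pstar lam C Op"
  moreover from this have "y = proj_coords (P - Pstar) (marked_lift Pstar lam y)"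
    by (auto simp: coord_space_def proj_coords_def marked_lift_def)
  ultimately show "y \<in> proj_coords (P - Pstar) ` marked_chain_order_polytope P Pstar lam C Op"
    by blast
qed

lemma saturated_chain_conv:
  "saturated_chain P cs \<longleftrightarrow>
     (\<exists>a ts b. cs = a # ts @ [b] \<and> successively (covers P) (a # ts @ [b]))"
proof
  assume sat: "saturated_chain P cs"
  then obtain a t where cs: "cs = a # t"
    by (cases cs) (auto simp: saturated_chain_iff)
  with sat have "t \<noteq> []" "successively (covers P) cs"
    by (auto simp: saturated_chain_iff)
  with cs show "\<exists>a ts b. cs = a # ts @ [b] \<and> successively (covers P) (a # ts @ [b])"
    by (metis append_butlast_last_id)
qed (auto simp: saturated_chain_iff)

lemma saturated_chain_constraints_conv:
  "(\<forall>cs. saturated_chain P cs \<and> hd cs \<in> S \<and> last cs \<in> S \<and> set (butlast (tl cs)) \<subseteq> C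
      \<longrightarrow> sum_list (map x (butlast (tl cs))) \<le> x (last cs) - x (hd cs)) \<longleftrightarrow>
   (\<forall>a ts b. a \<in> S \<and> b \<in> S \<and> set ts \<subseteq> C \<and> successively (covers P) (a # ts @ [b])
      \<longrightarrow> sum_list (map x ts) \<le> x b - x a)"
  (is "?chains \<longleftrightarrow> ?paths")
proof
  assume ?chains
  show ?paths
  proof (intro allI impI)
    fix a ts b
    assume "a \<in> S \<and> b \<in> S \<and> set ts \<subseteq> C \<and> successively (covers P) (a # ts @ [b])"
    then show "sum_list (map x ts) \<le> x b - x a"
      using \<open>?chains\<close>[rule_format, of "a # ts @ [b]"] by (auto simp: saturated_chain_iff)
  qed
next
  assume ?paths
  show ?chains
  proof (intro allI impI)
    fix cs
    assume cs: "saturated_chain P cs \<and> hd cs \<in> S \<and> last cs \<in> S \<and> set (butlast (tl cs)) \<subseteq> C"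
    then obtain a ts b where eq: "cs = a # ts @ [b]" and "successively (covers P) (a # ts @ [b])"
      unfolding saturated_chain_conv by blast
    moreover have "a \<in> S" "b \<in> S" "set ts \<subseteq> C"
      using cs by (simp_all add: eq)
    ultimately have "sum_list (map x ts) \<le> x b - x a"
      using \<open>?paths\<close> by blast
    then show "sum_list (map x (butlast (tl cs))) \<le> x (last cs) - x (hd cs)"
      by (simp add: eq)
  qed
qed

lemma mem_marked_chain_order_polytope_iff:
  "x \<in> marked_chain_order_polytope P Pstar lam C Op \<longleftrightarrow>
     (\<forall>p. p \<notin> P \<longrightarrow> x p = 0) \<and> (\<forall>a\<in>Pstar. x a = lam a) \<and> (\<forall>p\<in>C. 0 \<le> x p) \<and>
     (\<forall>a ts b. a \<in> Pstar \<union> Op \<and> b \<in> Pstar \<union> Op \<and> set ts \<subseteq> C \<and>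
        successively (covers P) (a # ts @ [b]) \<longrightarrow> sum_list (map x ts) \<le> x b - x a)"
  unfolding marked_chain_order_polytope_def mem_Collect_eq saturated_chain_constraints_conv ..

lemma marked_chain_order_polytope_chainD:
  assumes "x \<in> marked_chain_order_polytope P Pstar lam C Op"
    and "a \<in> Pstar \<union> Op" and "b \<in> Pstar \<union> Op" and "set ts \<subseteq> C"
    and "successively (covers P) (a # ts @ [b])"
  shows "sum_list (map x ts) \<le> x b - x a"
  using assms unfolding mem_marked_chain_order_polytope_iff by blast

lemma interior_marked_lift_perturb:
  assumes "y \<in> interior_in_coords (P - Pstar)
             (proj_coords (P - Pstar) ` marked_chain_order_polytope P Pstar lam C Op)"
    and "p \<in> P - Pstar"
  obtains \<delta> where "\<delta> > 0"
    and "(marked_lift Pstar lam y)(p := marked_lift Pstar lam y p + \<delta>)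
           \<in> marked_chain_order_polytope P Pstar lam C Op"
    and "(marked_lift Pstar lam y)(p := marked_lift Pstar lam y p - \<delta>)
           \<in> marked_chain_order_polytope P Pstar lam C Op"
proof -
  obtain e where "e > 0" and e: "\<And>t. \<bar>t\<bar> < e \<Longrightarrow>
      y(p := y p + t) \<in> proj_coords (P - Pstar) ` marked_chain_order_polytope P Pstar lam C Op"
    using interior_in_coords_perturb[OF assms] by blast
  have "(marked_lift Pstar lam y)(p := marked_lift Pstar lam y p + t)
          \<in> marked_chain_order_polytope P Pstar lam C Op" if "\<bar>t\<bar> < e" for t
    using e[OF that] assms(2)
    by (simp add: mem_proj_marked_chain_order_polytope_iff marked_lift_update)
      (simp add: marked_lift_def)
  from this[of "e / 2"] this[of "- (e / 2)"] \<open>e > 0\<close> show thesis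
    by (intro that[of "e / 2"]) simp_all
qed

definition canonical_point :: "'a set \<Rightarrow> 'a set \<Rightarrow> ('a \<Rightarrow> int) \<Rightarrow> 'a \<Rightarrow> real" where
  "canonical_point C Op r q = (if q \<in> C then 1 else if q \<in> Op then of_int (r q) else 0)"

locale ranked_marked_poset =
  fixes P Pstar C Op :: "'a::order set" and r :: "'a \<Rightarrow> int"
  assumes finite_P: "finite P"
    and rank: "is_rank_function P r"
    and marked_subset: "Pstar \<subseteq> P"
    and extremal_marked: "min_elems P \<union> max_elems P \<subseteq> Pstar"
    and partition: "C \<union> Op = P - Pstar"
    and disjoint: "C \<inter> Op = {}"
begin

abbreviation marked_polytope :: "('a \<Rightarrow> real) set" where
  "marked_polytope \<equiv> marked_chain_order_polytope P Pstar (\<lambda>a. of_int (r a)) C Op"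

abbreviation lift :: "('a \<Rightarrow> real) \<Rightarrow> 'a \<Rightarrow> real" where
  "lift \<equiv> marked_lift Pstar (\<lambda>a. of_int (r a))"

lemma unmarked_subset: "C \<subseteq> P - Pstar" "Op \<subseteq> P - Pstar"
  using partition by blast+

lemma order_part_subset: "Pstar \<union> Op \<subseteq> P"
  using marked_subset partition by blast

lemma rank_chain_diff:
  assumes "successively (covers P) (a # ts @ [b])"
  shows "real_of_int (r b) - r a = real (length ts) + 1"
proof -
  have "r b - r a = int (length ts) + 1"
    using rank_last_minus_hd[OF rank assms] by simp
  then show ?thesis
    by (metis of_int_add of_int_diff of_int_of_nat_eq of_int_1)
qed

lemma chain_from_below:
  assumes "q \<in> P - Pstar"
  obtains a ts where "a \<in> Pstar \<union> Op" and "set ts \<subseteq> C"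
    and "successively (covers P) (a # ts @ [q])" and "a < q"
proof -
  have "q \<notin> Pstar \<longrightarrow> (\<exists>a ts. a \<in> Pstar \<union> Op \<and> set ts \<subseteq> C \<and>
          successively (covers P) (a # ts @ [q]) \<and> a < q)" if "q \<in> P" for q
    using finite_P that order.strict_trans less_irrefl
  proof (rule finite_strict_order_induct)
    fix q
    assume q: "q \<in> P" and IH: "\<And>c. c \<in> P \<Longrightarrow> c < q \<Longrightarrow> c \<notin> Pstar \<longrightarrow> (\<exists>a ts.
      a \<in> Pstar \<union> Op \<and> set ts \<subseteq> C \<and> successively (covers P) (a # ts @ [c]) \<and> a < c)"
    show "q \<notin> Pstar \<longrightarrow> (\<exists>a ts. a \<in> Pstar \<union> Op \<and> set ts \<subseteq> C \<and>
          successively (covers P) (a # ts @ [q]) \<and> a < q)"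
    proof
      assume "q \<notin> Pstar"
      then obtain b where b: "b \<in> P" "b < q"
        using q extremal_marked by (auto simp: min_elems_def)
      obtain c where cov: "covers P c q"
        using exists_lower_cover[OF finite_P b(1) q b(2)] .
      then have c: "c \<in> P" "c < q"
        by (auto simp: covers_def)
      show "\<exists>a ts. a \<in> Pstar \<union> Op \<and> set ts \<subseteq> C \<and> successively (covers P) (a # ts @ [q]) \<and> a < q"
      proof (cases "c \<in> C")
        case True
        then obtain a ts where "a \<in> Pstar \<union> Op" "set ts \<subseteq> C"
          "successively (covers P) (a # ts @ [c])" "a < c"
          using IH[OF c] partition by blast
        moreover have "successively (covers P) (a # ts @ [c, q])"
          using successively_glue[of "covers P" "a # ts" c "[q]"] cov calculation(3) by simp
        ultimately show ?thesis
          using True c by (intro exI[of _ a] exI[of _ "ts @ [c]"]) (auto intro: order.strict_trans)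
      next
        case False
        with c cov partition show ?thesis
          by (intro exI[of _ c] exI[of _ "[]"]) auto
      qed
    qed
  qed
  with assms that show thesis by blast
qed

lemma chain_to_above:
  assumes "q \<in> P - Pstar"
  obtains ts b where "b \<in> Pstar \<union> Op" and "set ts \<subseteq> C"
    and "successively (covers P) (q # ts @ [b])" and "q < b"
proof -
  have "q \<notin> Pstar \<longrightarrow> (\<exists>ts b. b \<in> Pstar \<union> Op \<and> set ts \<subseteq> C \<and>
          successively (covers P) (q # ts @ [b]) \<and> q < b)" if "q \<in> P" for q
    using finite_P that
  proof (rule finite_strict_order_induct[where R = "\<lambda>a b. b < a"])
    fix q
    assume q: "q \<in> P" and IH: "\<And>c. c \<in> P \<Longrightarrow> q < c \<Longrightarrow> c \<notin> Pstar \<longrightarrow> (\<exists>ts b.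
      b \<in> Pstar \<union> Op \<and> set ts \<subseteq> C \<and> successively (covers P) (c # ts @ [b]) \<and> c < b)"
    show "q \<notin> Pstar \<longrightarrow> (\<exists>ts b. b \<in> Pstar \<union> Op \<and> set ts \<subseteq> C \<and>
          successively (covers P) (q # ts @ [b]) \<and> q < b)"
    proof
      assume "q \<notin> Pstar"
      then obtain b where b: "b \<in> P" "q < b"
        using q extremal_marked by (auto simp: max_elems_def)
      obtain c where cov: "covers P q c"
        using exists_upper_cover[OF finite_P b(1) q b(2)] .
      then have c: "c \<in> P" "q < c"
        by (auto simp: covers_def)
      show "\<exists>ts b. b \<in> Pstar \<union> Op \<and> set ts \<subseteq> C \<and> successively (covers P) (q # ts @ [b]) \<and> q < b"
      proof (cases "c \<in> C")
        case True
        then obtain ts b where "b \<in> Pstar \<union> Op" "set ts \<subseteq> C"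
          "successively (covers P) (c # ts @ [b])" "c < b"
          using IH[OF c] partition by blast
        with True cov c show ?thesis
          by (intro exI[of _ "c # ts"] exI[of _ b]) (auto intro: order.strict_trans)
      next
        case False
        with c cov partition show ?thesis
          by (intro exI[of _ "[]"] exI[of _ c]) auto
      qed
    qed
  qed (auto intro: order.strict_trans)
  with assms that show thesis by blast
qed

context
  fixes F :: "'a \<Rightarrow> real"
  assumes marked_rank: "\<And>a. a \<in> Pstar \<Longrightarrow> F a = r a"
    and chain_part_ge_one: "\<And>p. p \<in> C \<Longrightarrow> 1 \<le> F p"
    and chain_gap: "\<And>a ts b. a \<in> Pstar \<union> Op \<Longrightarrow> b \<in> Pstar \<union> Op \<Longrightarrow> set ts \<subseteq> C \<Longrightarrow>
      successively (covers P) (a # ts @ [b]) \<Longrightarrow> sum_list (map F ts) + 1 \<le> F b - F a"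
begin

lemma excess_chain_mono:
  assumes "a \<in> Pstar \<union> Op" and "b \<in> Pstar \<union> Op" and "set ts \<subseteq> C"
    and chain: "successively (covers P) (a # ts @ [b])"
  shows "F a - r a + sum_list (map (\<lambda>p. F p - 1) ts) \<le> F b - r b"
proof -
  have "sum_list (map (\<lambda>p. F p - 1) ts) = sum_list (map F ts) - real (length ts)"
    by (simp add: sum_list_subtractf sum_list_triv)
  then show ?thesis
    using chain_gap[OF assms] rank_chain_diff[OF chain] by linarith
qed

lemma chain_excess_nonneg: "set ts \<subseteq> C \<Longrightarrow> 0 \<le> sum_list (map (\<lambda>p. F p - 1) ts)"
  using chain_part_ge_one by (intro sum_list_nonneg) auto

lemma rank_le_value:
  assumes "q \<in> Pstar \<union> Op"
  shows "r q \<le> F q"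
proof -
  have "q \<in> Pstar \<union> Op \<longrightarrow> r q \<le> F q"
    using finite_P subsetD[OF order_part_subset assms] order.strict_trans less_irrefl
  proof (rule finite_strict_order_induct)
    fix q
    assume IH: "\<And>c. c \<in> P \<Longrightarrow> c < q \<Longrightarrow> c \<in> Pstar \<union> Op \<longrightarrow> r c \<le> F c"
    show "q \<in> Pstar \<union> Op \<longrightarrow> r q \<le> F q"
    proof
      assume q: "q \<in> Pstar \<union> Op"
      show "r q \<le> F q"
      proof (cases "q \<in> Pstar")
        case True
        then show ?thesis by (simp add: marked_rank)
      next
        case False
        with q unmarked_subset have "q \<in> P - Pstar" by blast
        then obtain a ts where a: "a \<in> Pstar \<union> Op" "set ts \<subseteq> C"
          "successively (covers P) (a # ts @ [q])" "a < q"
          by (rule chain_from_below)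
        have "r a \<le> F a"
          using IH a(1,4) order_part_subset by blast
        with excess_chain_mono[OF a(1) q a(2,3)] chain_excess_nonneg[OF a(2)] show ?thesis
          by linarith
      qed
    qed
  qed
  with assms show ?thesis by blast
qed

lemma value_le_rank:
  assumes "q \<in> Pstar \<union> Op"
  shows "F q \<le> r q"
proof -
  have "q \<in> Pstar \<union> Op \<longrightarrow> F q \<le> r q"
    using finite_P subsetD[OF order_part_subset assms]
  proof (rule finite_strict_order_induct[where R = "\<lambda>a b. b < a"])
    fix q
    assume IH: "\<And>c. c \<in> P \<Longrightarrow> q < c \<Longrightarrow> c \<in> Pstar \<union> Op \<longrightarrow> F c \<le> r c"
    show "q \<in> Pstar \<union> Op \<longrightarrow> F q \<le> r q"
    proof
      assume q: "q \<in> Pstar \<union> Op"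
      show "F q \<le> r q"
      proof (cases "q \<in> Pstar")
        case True
        then show ?thesis by (simp add: marked_rank)
      next
        case False
        with q unmarked_subset have "q \<in> P - Pstar" by blast
        then obtain ts b where b: "b \<in> Pstar \<union> Op" "set ts \<subseteq> C"
          "successively (covers P) (q # ts @ [b])" "q < b"
          by (rule chain_to_above)
        have "F b \<le> r b"
          using IH b(1,4) order_part_subset by blast
        with excess_chain_mono[OF q b(1,2,3)] chain_excess_nonneg[OF b(2)] show ?thesis
          by linarith
      qed
    qed
  qed (auto intro: order.strict_trans)
  with assms show ?thesis by blast
qed

lemma value_eq_rank:
  assumes "q \<in> Pstar \<union> Op"
  shows "F q = r q"
  using value_le_rank[OF assms] rank_le_value[OF assms] by (rule order.antisym)

lemma value_eq_one:
  assumes "q \<in> C"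
  shows "F q = 1"
proof -
  have q: "q \<in> P - Pstar"
    using assms unmarked_subset by blast
  obtain a ts where a: "a \<in> Pstar \<union> Op" "set ts \<subseteq> C"
    "successively (covers P) (a # ts @ [q])" "a < q"
    using q by (rule chain_from_below)
  obtain ts' b where b: "b \<in> Pstar \<union> Op" "set ts' \<subseteq> C"
    "successively (covers P) (q # ts' @ [b])" "q < b"
    using q by (rule chain_to_above)
  have chain: "successively (covers P) (a # (ts @ q # ts') @ [b])"
    using successively_glue[of "covers P" "a # ts" q "ts' @ [b]"] a(3) b(3) by simp
  have ts: "set (ts @ q # ts') \<subseteq> C"
    using a(2) b(2) assms by simp
  have "F a - r a + sum_list (map (\<lambda>p. F p - 1) (ts @ q # ts')) \<le> F b - r b"
    using excess_chain_mono[OF a(1) b(1) ts chain] .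
  then have "sum_list (map (\<lambda>p. F p - 1) (ts @ q # ts')) \<le> 0"
    using value_eq_rank[OF a(1)] value_eq_rank[OF b(1)] by linarith
  moreover have "F q - 1 \<le> sum_list (map (\<lambda>p. F p - 1) (ts @ q # ts'))"
    using ts chain_part_ge_one by (intro member_le_sum_list) auto
  ultimately show ?thesis
    using chain_part_ge_one[OF assms] by linarith
qed

end

context
  fixes y :: "'a \<Rightarrow> real"
  assumes interior: "y \<in> interior_in_coords (P - Pstar) (proj_coords (P - Pstar) ` marked_polytope)"
    and lattice: "y \<in> lattice_points (P - Pstar)"
begin

lemma lift_Ints: "q \<in> P \<Longrightarrow> lift y q \<in> \<int>"
  using lattice by (auto simp: marked_lift_def lattice_points_def)

lemma lift_ge_one:
  assumes "p \<in> C"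
  shows "1 \<le> lift y p"
proof -
  have p: "p \<in> P - Pstar"
    using assms unmarked_subset by blast
  obtain \<delta> where "\<delta> > 0" and "(lift y)(p := lift y p + \<delta>) \<in> marked_polytope"
    and "(lift y)(p := lift y p - \<delta>) \<in> marked_polytope"
    using interior p by (rule interior_marked_lift_perturb)
  then have "0 < lift y p"
    using assms by (auto simp: mem_marked_chain_order_polytope_iff)
  then show ?thesis
    using Ints_less_imp_add_one_le[of 0 "lift y p"] lift_Ints p by simp
qed

lemma lift_cover_strict:
  assumes a: "a \<in> Pstar \<union> Op" and b: "b \<in> Pstar \<union> Op" and cover: "covers P a b"
  shows "lift y a < lift y b"
proof -
  have bound: "x a \<le> x b" if "x \<in> marked_polytope" for x
    using marked_chain_order_polytope_chainD[OF that a b, of "[]"] cover by simp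
  have "a \<noteq> b"
    using cover by (auto simp: covers_def)
  consider "a \<in> Op" | "b \<in> Op" | "a \<in> Pstar" "b \<in> Pstar"
    using a b by blast
  then show ?thesis
  proof cases
    case 1
    then have a_unmarked: "a \<in> P - Pstar"
      using unmarked_subset by blast
    obtain \<delta> where "\<delta> > 0" and "(lift y)(a := lift y a + \<delta>) \<in> marked_polytope"
      and "(lift y)(a := lift y a - \<delta>) \<in> marked_polytope"
      using interior a_unmarked by (rule interior_marked_lift_perturb)
    then show ?thesis
      using bound[of "(lift y)(a := lift y a + \<delta>)"] \<open>a \<noteq> b\<close> by simp
  next
    case 2
    then have b_unmarked: "b \<in> P - Pstar"
      using unmarked_subset by blast
    obtain \<delta> where "\<delta> > 0" and "(lift y)(b := lift y b + \<delta>) \<in> marked_polytope"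
      and "(lift y)(b := lift y b - \<delta>) \<in> marked_polytope"
      using interior b_unmarked by (rule interior_marked_lift_perturb)
    then show ?thesis
      using bound[of "(lift y)(b := lift y b - \<delta>)"] \<open>a \<noteq> b\<close> by simp
  next
    case 3
    have "successively (covers P) (a # [] @ [b])"
      using cover by simp
    from rank_chain_diff[OF this] 3 show ?thesis
      by (simp add: marked_lift_def)
  qed
qed

lemma lift_chain_strict_inner:
  assumes a: "a \<in> Pstar \<union> Op" and b: "b \<in> Pstar \<union> Op" and ts: "set ts \<subseteq> C"
    and chain: "successively (covers P) (a # ts @ [b])" and p: "p \<in> set ts"
  shows "sum_list (map (lift y) ts) < lift y b - lift y a"
proof -
  have p_unmarked: "p \<in> P - Pstar"
    using p ts unmarked_subset by blast
  obtain \<delta> where "\<delta> > 0" and up: "(lift y)(p := lift y p + \<delta>) \<in> marked_polytope"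
    and "(lift y)(p := lift y p - \<delta>) \<in> marked_polytope"
    using interior p_unmarked by (rule interior_marked_lift_perturb)
  define x where "x = (lift y)(p := lift y p + \<delta>)"
  have "distinct (a # ts @ [b])"
    using successively_covers_sorted[OF chain] by (rule sorted_wrt_less_distinct)
  then have "x a = lift y a" "x b = lift y b" "x p = lift y p + \<delta>"
    using p by (auto simp: x_def)
  moreover have "sum_list (map x ts) \<le> x b - x a"
    using marked_chain_order_polytope_chainD[OF up a b ts chain] by (simp add: x_def)
  moreover have "x p - lift y p \<le> sum_list (map (\<lambda>q. x q - lift y q) ts)"
  proof (rule member_le_sum_list)
    show "x p - lift y p \<in> set (map (\<lambda>q. x q - lift y q) ts)"
      using p by simp
    show "\<And>d. d \<in> set (map (\<lambda>q. x q - lift y q) ts) \<Longrightarrow> 0 \<le> d"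
      using \<open>\<delta> > 0\<close> by (auto simp: x_def)
  qed
  ultimately show ?thesis
    using \<open>\<delta> > 0\<close> by (simp add: sum_list_subtractf)
qed

lemma lift_chain_gap:
  assumes a: "a \<in> Pstar \<union> Op" and b: "b \<in> Pstar \<union> Op" and ts: "set ts \<subseteq> C"
    and chain: "successively (covers P) (a # ts @ [b])"
  shows "sum_list (map (lift y) ts) + 1 \<le> lift y b - lift y a"
proof -
  have strict: "sum_list (map (lift y) ts) < lift y b - lift y a"
  proof (cases ts)
    case Nil
    with chain lift_cover_strict[OF a b] show ?thesis
      by simp
  next
    case (Cons p ps)
    with lift_chain_strict_inner[OF a b ts chain, of p] show ?thesis
      by simp
  qed
  have "sum_list (map (lift y) ts) \<in> \<int>"
  proof (rule sum_list_map_Ints)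
    fix q
    assume "q \<in> set ts"
    with ts unmarked_subset have "q \<in> P" by blast
    then show "lift y q \<in> \<int>" by (rule lift_Ints)
  qed
  moreover have "lift y b - lift y a \<in> \<int>"
    using lift_Ints[OF subsetD[OF order_part_subset b]] lift_Ints[OF subsetD[OF order_part_subset a]] by (rule Ints_diff)
  ultimately show ?thesis
    using strict by (rule Ints_less_imp_add_one_le)
qed

lemma interior_lattice_point_eq: "y = canonical_point C Op r"
proof
  fix q
  have "y \<in> coord_space (P - Pstar)"
    using interior interior_in_coords_subset mem_proj_marked_chain_order_polytope_iff by blast
  moreover have "lift y q = r q" if "q \<in> Op"
    using value_eq_rank[OF _ lift_ge_one lift_chain_gap] that by (simp add: marked_lift_def)
  moreover have "lift y q = 1" if "q \<in> C"
    using value_eq_one[OF _ lift_ge_one lift_chain_gap that] by (simp add: marked_lift_def)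
  ultimately show "y q = canonical_point C Op r q"
    using partition disjoint unmarked_subset
    by (auto simp: canonical_point_def marked_lift_def coord_space_def)
qed

end

lemma canonical_point_lattice: "canonical_point C Op r \<in> lattice_points (P - Pstar)"
  using partition by (auto simp: lattice_points_def coord_space_def canonical_point_def)

lemma chain_sum_le_if_near_rank:
  fixes x :: "'a \<Rightarrow> real" and d :: real
  assumes chain: "successively (covers P) (a # ts @ [b])"
    and "0 \<le> d" and "real (card P) * d \<le> 1"
    and inner: "\<And>p. p \<in> set ts \<Longrightarrow> x p \<le> 1 + d"
    and "r b - d \<le> x b" and "x a \<le> r a + d"
  shows "sum_list (map x ts) \<le> x b - x a"
proof -
  have "length (a # ts @ [b]) \<le> card P"
    using successively_covers_length_le_card[OF finite_P chain] by simp
  then have "real (length ts + 2) * d \<le> real (card P) * d"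
    using \<open>0 \<le> d\<close> by (intro mult_right_mono) simp_all
  then have length_bound: "real (length ts) * d + 2 * d \<le> 1"
    using \<open>real (card P) * d \<le> 1\<close> by (simp add: algebra_simps)
  have "sum_list (map x ts) \<le> sum_list (map (\<lambda>_. 1 + d) ts)"
    using inner by (rule sum_list_mono)
  also have "\<dots> = real (length ts) + real (length ts) * d"
    by (simp add: sum_list_triv algebra_simps)
  finally show ?thesis
    using rank_chain_diff[OF chain] length_bound assms(5,6) by linarith
qed

lemma lift_mem_marked_polytope_if_near:
  assumes z: "z \<in> coord_space (P - Pstar)"
    and d: "0 < d" "d \<le> 1" "real (card P) * d \<le> 1"
    and near: "\<And>p. p \<in> P - Pstar \<Longrightarrow> \<bar>z p - canonical_point C Op r p\<bar> < d"
  shows "lift z \<in> marked_polytope"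
proof -
  have near_one: "\<bar>lift z p - 1\<bar> < d" if "p \<in> C" for p
    using near[of p] that unmarked_subset by (auto simp: marked_lift_def canonical_point_def)
  have near_rank: "\<bar>lift z q - r q\<bar> < d" if "q \<in> Pstar \<union> Op" for q
  proof (cases "q \<in> Pstar")
    case True
    with d show ?thesis
      by (simp add: marked_lift_def)
  next
    case False
    with that unmarked_subset disjoint have "q \<in> P - Pstar" "q \<in> Op" "q \<notin> C"
      by auto
    with near[of q] show ?thesis
      by (simp add: marked_lift_def canonical_point_def)
  qed
  show ?thesis
    unfolding mem_marked_chain_order_polytope_iff
  proof (intro conjI allI ballI impI)
    fix p
    assume "p \<notin> P"
    with z marked_subset show "lift z p = 0"
      by (auto simp: marked_lift_def coord_space_def)
  next
    fix p
    assume "p \<in> C"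
    with near_one[of p] d show "0 \<le> lift z p"
      by linarith
  next
    fix a ts b
    assume "a \<in> Pstar \<union> Op \<and> b \<in> Pstar \<union> Op \<and> set ts \<subseteq> C \<and>
      successively (covers P) (a # ts @ [b])"
    then have a: "a \<in> Pstar \<union> Op" and b: "b \<in> Pstar \<union> Op" and ts: "set ts \<subseteq> C"
      and chain: "successively (covers P) (a # ts @ [b])"
      by auto
    have inner: "lift z p \<le> 1 + d" if "p \<in> set ts" for p
      using near_one[of p] that ts by auto
    have "r b - d \<le> lift z b" "lift z a \<le> r a + d"
      using near_rank[OF b] near_rank[OF a] by (simp_all add: abs_less_iff)
    with inner d show "sum_list (map (lift z) ts) \<le> lift z b - lift z a"
      by (intro chain_sum_le_if_near_rank[OF chain]) simp_all
  qed (simp add: marked_lift_def)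
qed

lemma canonical_point_interior:
  "canonical_point C Op r \<in> interior_in_coords (P - Pstar) (proj_coords (P - Pstar) ` marked_polytope)"
proof -
  let ?y = "canonical_point C Op r"
  define d :: real where "d = 1 / (real (card P) + 1)"
  have d: "0 < d" "d \<le> 1" "real (card P) * d \<le> 1"
    by (simp_all add: d_def field_simps)
  show ?thesis
  proof (rule interior_in_coordsI)
    show "open {z. \<forall>p\<in>P - Pstar. \<bar>z p - ?y p\<bar> < d}"
      using finite_P by (intro open_coordinate_box) simp
    show "?y \<in> {z. \<forall>p\<in>P - Pstar. \<bar>z p - ?y p\<bar> < d}"
      using d by simp
    show "?y \<in> coord_space (P - Pstar)"
      using partition by (auto simp: coord_space_def canonical_point_def)
    show "coord_space (P - Pstar) \<inter> {z. \<forall>p\<in>P - Pstar. \<bar>z p - ?y p\<bar> < d}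
      \<subseteq> proj_coords (P - Pstar) ` marked_polytope"
    proof
      fix z
      assume "z \<in> coord_space (P - Pstar) \<inter> {z. \<forall>p\<in>P - Pstar. \<bar>z p - ?y p\<bar> < d}"
      then have z: "z \<in> coord_space (P - Pstar)"
        and near: "\<And>p. p \<in> P - Pstar \<Longrightarrow> \<bar>z p - ?y p\<bar> < d"
        by auto
      with lift_mem_marked_polytope_if_near[OF z d near] show "z \<in> proj_coords (P - Pstar) ` marked_polytope"
        by (simp add: mem_proj_marked_chain_order_polytope_iff)
    qed
  qed
qed

end

theorem corollary3p2:
  fixes P Pstar C Op :: "'a::order set" and r :: "'a \<Rightarrow> int"
  assumes "finite P"
    and "is_rank_function P r"
    and "Pstar \<subseteq> P"
    and "min_elems P \<union> max_elems P \<subseteq> Pstar"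
    and "C \<union> Op = P - Pstar" and "C \<inter> Op = {}"
  shows "\<exists>!y. y \<in> interior_in_coords (P - Pstar)
                 (proj_coords (P - Pstar) `
                    marked_chain_order_polytope P Pstar (\<lambda>a. of_int (r a)) C Op)
            \<and> y \<in> lattice_points (P - Pstar)"
proof -
  interpret ranked_marked_poset P Pstar C Op r
    using assms by unfold_locales
  show ?thesis
    using canonical_point_interior canonical_point_lattice interior_lattice_point_eq
    by blast
qed

end
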